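(* Let $T\ge2$. For every $s\ge s_{a,1}(T):=256\,r^2(\sigma/\Delta_k)^2\log T$, $$a_{k,s,1}:=E\big[\min\{N_{1,s}(\tau_k),T\}\,\mathbf 1(A_{1,s})\,\mathbf 1(G_{1,s})\big]\le T^{-1}.$$
   Context: Setting: arm $k\in[K]$ has i.i.d. rewards $Y_{k,1},Y_{k,2},\dots\sim N(\mu_k,\sigma^2)$; arm 1 is optimal, $\mu_1=\max_k\mu_k$, $\Delta_k=\mu_1-\mu_k>0$ for the suboptimal arm $k$ considered, and $\tau_k=(\mu_1+\mu_k)/2$. For $s\ge1$: $\mathcal H_{k,s}=(Y_{k,1},\dots,Y_{k,s})$, $\bar Y_{k,s}=s^{-1}\sum_{i=1}^sY_{k,i}$, $\mathrm{RSS}_{k,s}=\sum_{i=1}^s(Y_{k,i}-\bar Y_{k,s})^2$. Given $\sigma_a>0$, $\mathrm{PRSS}_{s}=2(s+2)\sigma_a^2$ and $r=\sigma_a/\sigma$. The ReBoot index given $\mathcal H_{k,s}$ is $\hat\mu^*_{k,s}=\bar Y_{k,s}+\frac1{s+2}\sum_{i=1}^{s+2}w_ie_{k,i}$ with $e_{k,i}=Y_{k,i}-\bar Y_{k,s}$ ($i\le s$), $e_{k,s+1}=\sqrt{s+2}\sigma_a$, $e_{k,s+2}=-\sqrt{s+2}\sigma_a$, and $w_i$ i.i.d. $N(0,1)$ independent of the rewards; thus conditionally on $\mathcal H_{k,s}$, $\hat\mu^*_{k,s}\sim N\big(\bar Y_{k,s},(s+2)^{-2}(\mathrm{RSS}_{k,s}+\mathrm{PRSS}_s)\big)$.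 Define $Q_{k,s}(\tau)=P(\hat\mu^*_{k,s}>\tau\mid\mathcal H_{k,s})$ and $N_{1,s}(\tau)=Q_{1,s}(\tau)^{-1}-1$. Events: $A_{1,s}=\{\bar Y_{1,s}-\mu_1>-\Delta_k/4\}$, $G_{1,s}=\{\mathrm{RSS}_{1,s}\le\mathrm{PRSS}_s\}$. *)

theory Defs
  imports "HOL-Probability.Probability"
begin

(* A history H_{1,s} = (Y_1,...,Y_s) is represented as y :: nat => real, with y i = Y_{i+1}, i < s. *)

definition sample_mean :: "nat \<Rightarrow> (nat \<Rightarrow> real) \<Rightarrow> real" where
  "sample_mean s y = (\<Sum>i<s. y i) / real s"

definition rss :: "nat \<Rightarrow> (nat \<Rightarrow> real) \<Rightarrow> real" where
  "rss s y = (\<Sum>i<s. (y i - sample_mean s y)\<^sup>2)"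

definition prss :: "real \<Rightarrow> nat \<Rightarrow> real" where
  "prss \<sigma>a s = 2 * (real s + 2) * \<sigma>a\<^sup>2"

(* conditional law of the ReBoot index given the history:
   N(mean, (s+2)^{-2} (RSS + PRSS)) ; normal_density takes the standard deviation *)
definition reboot_law :: "real \<Rightarrow> nat \<Rightarrow> (nat \<Rightarrow> real) \<Rightarrow> real measure" where
  "reboot_law \<sigma>a s y = density lborel
     (normal_density (sample_mean s y) (sqrt ((rss s y + prss \<sigma>a s) / (real s + 2)\<^sup>2)))"

definition Q_idx :: "real \<Rightarrow> nat \<Rightarrow> (nat \<Rightarrow> real) \<Rightarrow> real \<Rightarrow> real" where
  "Q_idx \<sigma>a s y \<tau> = measure (reboot_law \<sigma>a s y) {\<tau><..}"

definition N_idx :: "real \<Rightarrow> nat \<Rightarrow> (nat \<Rightarrow> real) \<Rightarrow> real \<Rightarrow> real" where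
  "N_idx \<sigma>a s y \<tau> = 1 / Q_idx \<sigma>a s y \<tau> - 1"

definition reward_law :: "real \<Rightarrow> real \<Rightarrow> nat \<Rightarrow> (nat \<Rightarrow> real) measure" where
  "reward_law \<mu> \<sigma> s = PiM {..<s} (\<lambda>_. density lborel (normal_density \<mu> \<sigma>))"

definition a_ks1 :: "real \<Rightarrow> real \<Rightarrow> real \<Rightarrow> real \<Rightarrow> real \<Rightarrow> nat \<Rightarrow> real" where
  "a_ks1 \<mu>1 \<sigma> \<sigma>a \<Delta> T s =
     (LINT y | reward_law \<mu>1 \<sigma> s.
        min (N_idx \<sigma>a s y (\<mu>1 - \<Delta> / 2)) T
        * (if sample_mean s y - \<mu>1 > - \<Delta> / 4 then 1 else 0)
        * (if rss s y \<le> prss \<sigma>a s then 1 else 0))"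

end

theory Submission imports Defs begin

text \<open>On the event G the conditional variance \<open>v\<close> of the ReBoot index is at most
  \<open>4 \<sigma>a\<^sup>2 / (s + 2)\<close>, and on the event A its conditional mean exceeds \<open>\<tau>\<close> by more than
  \<open>\<Delta> / 4\<close>. The Gaussian tail bound \<open>P(X \<le> mean - d) \<le> exp (- d\<^sup>2 / (2 v))\<close> therefore gives
  \<open>1 - Q(\<tau>) \<le> exp (- \<Delta>\<^sup>2 (s + 2) / (128 \<sigma>a\<^sup>2)) \<le> 1 / T\<^sup>2\<close> once \<open>s \<ge> 256 (\<sigma>a / \<Delta>)\<^sup>2 ln T\<close>,
  hence \<open>N(\<tau>) \<le> 1 / (T\<^sup>2 - 1) \<le> 1 / T\<close> pointwise on \<open>A \<inter> G\<close>. The integrand vanishes off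
  \<open>A \<inter> G\<close>, so the expectation inherits the bound.\<close>

lemma normal_density_le_shifted:
  fixes m w \<tau> x :: real
  assumes "w > 0" "\<tau> < m" "x \<le> \<tau>"
  shows "normal_density m w x \<le> exp (- (m - \<tau>)\<^sup>2 / (2 * w\<^sup>2)) * normal_density \<tau> w x"
proof -
  have "(x - m)\<^sup>2 = (m - \<tau>)\<^sup>2 + (x - \<tau>)\<^sup>2 + 2 * (m - \<tau>) * (\<tau> - x)"
    by (simp add: power2_eq_square algebra_simps)
  moreover have "2 * (m - \<tau>) * (\<tau> - x) \<ge> 0"
    using assms by simp
  ultimately have "- (x - m)\<^sup>2 / (2 * w\<^sup>2) \<le> - (m - \<tau>)\<^sup>2 / (2 * w\<^sup>2) + - (x - \<tau>)\<^sup>2 / (2 * w\<^sup>2)"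
    using assms(1) by (simp add: divide_simps)
  then have "exp (- (x - m)\<^sup>2 / (2 * w\<^sup>2))
      \<le> exp (- (m - \<tau>)\<^sup>2 / (2 * w\<^sup>2)) * exp (- (x - \<tau>)\<^sup>2 / (2 * w\<^sup>2))"
    by (simp add: exp_add[symmetric])
  then show ?thesis
    unfolding normal_density_def by (simp add: divide_right_mono)
qed

lemma normal_lower_tail_le:
  fixes m w \<tau> :: real
  assumes "w > 0" "\<tau> < m"
  shows "measure (density lborel (normal_density m w)) {..\<tau>} \<le> exp (- (m - \<tau>)\<^sup>2 / (2 * w\<^sup>2))"
proof -
  define e where "e = exp (- (m - \<tau>)\<^sup>2 / (2 * w\<^sup>2))"
  have "emeasure (density lborel (normal_density m w)) {..\<tau>}
      = (\<integral>\<^sup>+ x. ennreal (normal_density m w x) * indicator {..\<tau>} x \<partial>lborel)"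
    by (simp add: emeasure_density)
  also have "\<dots> \<le> (\<integral>\<^sup>+ x. ennreal e * ennreal (normal_density \<tau> w x) \<partial>lborel)"
  proof (rule nn_integral_mono)
    fix x
    show "ennreal (normal_density m w x) * indicator {..\<tau>} x \<le> ennreal e * ennreal (normal_density \<tau> w x)"
      using normal_density_le_shifted[OF assms, of x]
      by (cases "x \<le> \<tau>") (simp_all add: ennreal_mult[symmetric] e_def)
  qed
  also have "\<dots> = ennreal e"
    using assms(1) by (simp add: nn_integral_cmult nn_integral_eq_integral)
  finally show ?thesis
    unfolding measure_def e_def by (simp add: enn2real_leI)
qed

lemma normal_upper_tail_ge:
  fixes m w \<tau> :: real
  assumes "w > 0" "\<tau> < m"
  shows "1 - exp (- (m - \<tau>)\<^sup>2 / (2 * w\<^sup>2)) \<le> measure (density lborel (normal_density m w)) {\<tau><..}"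
proof -
  interpret prob_space "density lborel (normal_density m w)"
    using assms(1) by (simp add: prob_space_normal_density)
  have "prob (space (density lborel (normal_density m w)) - {..\<tau>}) = 1 - prob {..\<tau>}"
    by (rule prob_compl) simp
  moreover have "space (density lborel (normal_density m w)) - {..\<tau>} = {\<tau><..}"
    by auto
  ultimately show ?thesis
    using normal_lower_tail_le[OF assms] by simp
qed

lemma (in prob_space) integral_le_nonneg_const:
  fixes f :: "'a \<Rightarrow> real"
  assumes "\<And>x. f x \<le> c" "c \<ge> 0"
  shows "(\<integral>x. f x \<partial>M) \<le> c"
proof (cases "integrable M f")
  case True
  then show ?thesis
    using assms(1) by (intro integral_le_const) auto
qed (simp add: not_integrable_integral_eq assms(2))

lemma odds_le_inverse:
  fixes Q T :: real
  assumes "T \<ge> 2" "1 - 1 / T\<^sup>2 \<le> Q"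
  shows "1 / Q - 1 \<le> 1 / T"
proof -
  have "2 * T \<le> T * T"
    using assms(1) by (intro mult_right_mono) auto
  then have T_le: "T \<le> T\<^sup>2 - 1"
    using assms(1) unfolding power2_eq_square by linarith
  have "0 < 1 - 1 / T\<^sup>2"
    using T_le assms(1) by (simp add: field_simps)
  then have "1 / Q - 1 \<le> 1 / (1 - 1 / T\<^sup>2) - 1"
    using assms(2) by (intro diff_right_mono frac_le) auto
  also have "\<dots> = 1 / (T\<^sup>2 - 1)"
    using T_le assms(1) by (simp add: field_simps)
  also have "\<dots> \<le> 1 / T"
    using T_le assms(1) by (intro frac_le) auto
  finally show ?thesis .
qed

lemma reboot_variance_le:
  assumes "rss s y \<le> prss \<sigma>a s"
  shows "(rss s y + prss \<sigma>a s) / (real s + 2)\<^sup>2 \<le> 4 * \<sigma>a\<^sup>2 / (real s + 2)"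
proof -
  have "(rss s y + prss \<sigma>a s) / (real s + 2)\<^sup>2 \<le> 2 * prss \<sigma>a s / (real s + 2)\<^sup>2"
    using assms by (simp add: divide_right_mono)
  also have "\<dots> = (real s + 2) * (4 * \<sigma>a\<^sup>2) / ((real s + 2) * (real s + 2))"
    unfolding prss_def power2_eq_square by (simp add: algebra_simps)
  also have "\<dots> = 4 * \<sigma>a\<^sup>2 / (real s + 2)"
    by simp
  finally show ?thesis .
qed

lemma Q_idx_ge:
  fixes \<mu>1 \<Delta> \<sigma>a T :: real
  assumes "\<sigma>a > 0" "\<Delta> > 0" "T > 0"
    and s_ge: "256 * \<sigma>a\<^sup>2 / \<Delta>\<^sup>2 * ln T \<le> real s"
    and A: "sample_mean s y - \<mu>1 > - \<Delta> / 4" and G: "rss s y \<le> prss \<sigma>a s"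
  shows "1 - 1 / T\<^sup>2 \<le> Q_idx \<sigma>a s y (\<mu>1 - \<Delta> / 2)"
proof -
  define m where "m = sample_mean s y"
  define \<tau> where "\<tau> = \<mu>1 - \<Delta> / 2"
  define v where "v = (rss s y + prss \<sigma>a s) / (real s + 2)\<^sup>2"
  have "rss s y \<ge> 0"
    unfolding rss_def by (simp add: sum_nonneg)
  then have v_pos: "v > 0"
    unfolding v_def prss_def using assms(1) by (simp add: add_nonneg_pos)
  have v_le: "v \<le> 4 * \<sigma>a\<^sup>2 / (real s + 2)"
    unfolding v_def using G by (rule reboot_variance_le)
  have gap: "\<Delta> / 4 < m - \<tau>"
    using A unfolding m_def \<tau>_def by simp
  have "2 * ln T * (128 * \<sigma>a\<^sup>2) \<le> \<Delta>\<^sup>2 * real s"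
    using mult_left_mono[OF s_ge, of "\<Delta>\<^sup>2"] assms(2) by (simp add: mult_ac)
  then have "2 * ln T \<le> \<Delta>\<^sup>2 * real s / (128 * \<sigma>a\<^sup>2)"
    using assms(1) by (simp add: pos_le_divide_eq)
  also have "\<dots> \<le> \<Delta>\<^sup>2 * (real s + 2) / (128 * \<sigma>a\<^sup>2)"
    by (intro divide_right_mono mult_left_mono) auto
  also have "\<dots> = (\<Delta> / 4)\<^sup>2 / (2 * (4 * \<sigma>a\<^sup>2 / (real s + 2)))"
    by (simp add: power_divide)
  also have "\<dots> \<le> (m - \<tau>)\<^sup>2 / (2 * v)"
    using gap v_le v_pos assms(2) by (intro frac_le power_mono) auto
  finally have "exp (- (m - \<tau>)\<^sup>2 / (2 * (sqrt v)\<^sup>2)) \<le> exp (- (2 * ln T))"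
    using v_pos by simp
  also have "\<dots> = 1 / T\<^sup>2"
  proof -
    have "2 * ln T = ln (T\<^sup>2)"
      using assms(3) by (simp add: ln_realpow)
    then show ?thesis
      using assms(3) by (simp add: exp_minus inverse_eq_divide)
  qed
  moreover have "1 - exp (- (m - \<tau>)\<^sup>2 / (2 * (sqrt v)\<^sup>2))
      \<le> measure (density lborel (normal_density m (sqrt v))) {\<tau><..}"
    using v_pos gap assms(2) by (intro normal_upper_tail_ge) auto
  ultimately have "1 - 1 / T\<^sup>2 \<le> measure (density lborel (normal_density m (sqrt v))) {\<tau><..}"
    by linarith
  then show ?thesis
    unfolding Q_idx_def reboot_law_def m_def \<tau>_def v_def .
qed

theorem mainTheorem4:
  fixes \<mu>1 \<mu>k \<sigma> \<sigma>a T :: real and s :: nat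
  assumes "\<sigma> > 0" and "\<sigma>a > 0" and "\<mu>k < \<mu>1" and "T \<ge> 2" and "s \<ge> 1"
    and "real s \<ge> 256 * (\<sigma>a / \<sigma>)\<^sup>2 * (\<sigma> / (\<mu>1 - \<mu>k))\<^sup>2 * ln T"
  shows "a_ks1 \<mu>1 \<sigma> \<sigma>a (\<mu>1 - \<mu>k) T s \<le> 1 / T"
proof -
  define \<Delta> where "\<Delta> = \<mu>1 - \<mu>k"
  have \<Delta>_pos: "\<Delta> > 0"
    using assms(3) unfolding \<Delta>_def by simp
  have T_pos: "T > 0"
    using assms(4) by simp
  have "(\<sigma>a / \<sigma>)\<^sup>2 * (\<sigma> / \<Delta>)\<^sup>2 = \<sigma>a\<^sup>2 / \<Delta>\<^sup>2"
    using assms(1) by (simp add: power_divide)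
  then have s_ge: "256 * \<sigma>a\<^sup>2 / \<Delta>\<^sup>2 * ln T \<le> real s"
    using assms(6) unfolding \<Delta>_def[symmetric] by (simp add: mult.assoc)
  have integrand_le: "min (N_idx \<sigma>a s y (\<mu>1 - \<Delta> / 2)) T
      * (if sample_mean s y - \<mu>1 > - \<Delta> / 4 then 1 else 0)
      * (if rss s y \<le> prss \<sigma>a s then 1 else 0) \<le> 1 / T" for y
  proof (cases "sample_mean s y - \<mu>1 > - \<Delta> / 4 \<and> rss s y \<le> prss \<sigma>a s")
    case True
    then have "N_idx \<sigma>a s y (\<mu>1 - \<Delta> / 2) \<le> 1 / T"
      unfolding N_idx_def using assms(2,4) \<Delta>_pos T_pos s_ge
      by (blast intro: odds_le_inverse Q_idx_ge)
    then show ?thesis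
      using True by (simp add: min.coboundedI1)
  qed (use T_pos in auto)
  interpret prob_space "reward_law \<mu>1 \<sigma> s"
    unfolding reward_law_def using assms(1) by (intro prob_space_PiM) (simp add: prob_space_normal_density)
  show ?thesis
    unfolding a_ks1_def \<Delta>_def[symmetric] using integrand_le T_pos
    by (intro integral_le_nonneg_const) auto
qed

end
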